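(* For every integer $n\ge1$, the set $S_2^{(n)}=\{k\in\mathbb{R}\setminus B_n : E_{(a^{(n)}_{k,2},\,b^{(n)}_{k,2})} \text{ is defined over } \mathbb{Q}\}$ is countable.
   Context: Define $f_m,g_m\in\mathbb{Z}[T]$ by $f_0=0,f_1=1,g_0=2,g_1=T$, $f_m=Tf_{m-1}+f_{m-2}$, $g_m=Tg_{m-1}+g_{m-2}$, and set $F_n=f_{n+1}-f_n$, $G_n=g_{n+1}-g_n$. Let $B_n=\{k\in\mathbb{R}: F_n(k)-1=0 \text{ or } G_n(k)-k+2=0\}$. For $k\notin B_n$, the singular $k$-FL pair of level $n$ of Type 2 is $a^{(n)}_{k,2}=-\frac{27(F_n(k)-1)^2}{4(G_n(k)-k+2)^2}$, $b^{(n)}_{k,2}=\frac{27(F_n(k)-1)^3}{4(G_n(k)-k+2)^3}$. For real $a,b$, $E_{(a,b)}$ is the plane curve $y^2=x^3+ax+b$; it is defined over $\mathbb{Q}$ exactly when $a,b\in\mathbb{Q}$. *)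

theory Defs
  imports "HOL-Analysis.Analysis" "HOL-Computational_Algebra.Polynomial"
begin

fun fpoly :: "nat \<Rightarrow> int poly" where
  "fpoly 0 = 0"
| "fpoly (Suc 0) = 1"
| "fpoly (Suc (Suc m)) = [:0, 1:] * fpoly (Suc m) + fpoly m"

fun gpoly :: "nat \<Rightarrow> int poly" where
  "gpoly 0 = 2"
| "gpoly (Suc 0) = [:0, 1:]"
| "gpoly (Suc (Suc m)) = [:0, 1:] * gpoly (Suc m) + gpoly m"

definition Fpoly :: "nat \<Rightarrow> int poly" where
  "Fpoly n = fpoly (Suc n) - fpoly n"

definition Gpoly :: "nat \<Rightarrow> int poly" where
  "Gpoly n = gpoly (Suc n) - gpoly n"

definition evalR :: "int poly \<Rightarrow> real \<Rightarrow> real" where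
  "evalR p k = poly (map_poly of_int p) k"

definition Bset :: "nat \<Rightarrow> real set" where
  "Bset n = {k. evalR (Fpoly n) k - 1 = 0 \<or> evalR (Gpoly n) k - k + 2 = 0}"

definition a_type2 :: "nat \<Rightarrow> real \<Rightarrow> real" where
  "a_type2 n k = - (27 * (evalR (Fpoly n) k - 1)^2) / (4 * (evalR (Gpoly n) k - k + 2)^2)"

definition b_type2 :: "nat \<Rightarrow> real \<Rightarrow> real" where
  "b_type2 n k = (27 * (evalR (Fpoly n) k - 1)^3) / (4 * (evalR (Gpoly n) k - k + 2)^3)"

text \<open>The curve y^2 = x^3 + a x + b is defined over Q iff a, b are rational.\<close>
definition curve_defined_over_Q :: "real \<Rightarrow> real \<Rightarrow> bool" where
  "curve_defined_over_Q a b \<longleftrightarrow> a \<in> \<rat> \<and> b \<in> \<rat>"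

definition S2 :: "nat \<Rightarrow> real set" where
  "S2 n = {k. k \<notin> Bset n \<and> curve_defined_over_Q (a_type2 n k) (b_type2 n k)}"

end

theory Submission
  imports Defs
begin

text \<open>For k outside B_n the quotient -b/a of the Type 2 pair equals
  (F_n(k) - 1)/(G_n(k) - k + 2), so a rational curve forces k to be a root of
  (F_n - 1) - r (G_n - T + 2) for some rational r \<noteq> 0. Since deg F_n \<le> n < n + 1 = deg G_n,
  each of these polynomials is nonzero and has finitely many roots, and there
  are only countably many r.\<close>

lemma coeff_fpoly_eq_0: "m \<le> j \<Longrightarrow> coeff (fpoly m) j = 0"
proof (induction m arbitrary: j rule: fpoly.induct)
  case (3 m)
  then obtain i where "j = Suc i" by (cases j) auto
  with 3 show ?case by (simp add: coeff_pCons)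
qed simp_all

lemma coeff_gpoly_eq_0: "m < j \<Longrightarrow> coeff (gpoly m) j = 0"
proof (induction m arbitrary: j rule: gpoly.induct)
  case 1
  then show ?case by (simp add: numeral_poly coeff_pCons split: nat.splits)
next
  case 2
  then show ?case by (simp add: coeff_pCons split: nat.splits)
next
  case (3 m)
  then obtain i where "j = Suc i" by (cases j) auto
  with 3 show ?case by (simp add: coeff_pCons)
qed

lemma coeff_gpoly_self: "1 \<le> m \<Longrightarrow> coeff (gpoly m) m = 1"
proof (induction m rule: gpoly.induct)
  case (3 m)
  then show ?case by (cases m) (simp_all add: coeff_pCons coeff_gpoly_eq_0 numeral_poly)
qed (simp_all add: coeff_pCons)

lemma degree_Fpoly_le: "degree (Fpoly n) \<le> n"
  by (rule degree_le) (simp add: Fpoly_def coeff_fpoly_eq_0)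

lemma degree_Gpoly: "degree (Gpoly n) = Suc n"
proof (rule antisym)
  show "degree (Gpoly n) \<le> Suc n"
    by (rule degree_le) (simp add: Gpoly_def coeff_gpoly_eq_0)
  show "Suc n \<le> degree (Gpoly n)"
    by (rule le_degree) (simp add: Gpoly_def coeff_gpoly_self coeff_gpoly_eq_0)
qed

lemma degree_of_int_poly: "degree (map_poly (of_int :: int \<Rightarrow> 'a::ring_char_0) p) = degree p"
  by (rule degree_map_poly) simp

lemma countable_rat_quotient_points:
  fixes p q :: "real poly"
  assumes "degree p < degree q"
  shows "countable {x. poly p x \<noteq> 0 \<and> poly q x \<noteq> 0 \<and> poly p x / poly q x \<in> \<rat>}"
proof -
  have nonzero: "p - smult r q \<noteq> 0" if "r \<noteq> 0" for r
  proof
    assume "p - smult r q = 0"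
    then have "degree p = degree (smult r q)" by simp
    with assms that show False by simp
  qed
  have "{x. poly p x \<noteq> 0 \<and> poly q x \<noteq> 0 \<and> poly p x / poly q x \<in> \<rat>}
        \<subseteq> (\<Union>r\<in>\<rat> - {0}. {x. poly (p - smult r q) x = 0})"
  proof clarify
    fix x assume "poly p x \<noteq> 0" "poly q x \<noteq> 0" "poly p x / poly q x \<in> \<rat>"
    then show "x \<in> (\<Union>r\<in>\<rat> - {0}. {x. poly (p - smult r q) x = 0})"
      by (intro UN_I[of "poly p x / poly q x"]) auto
  qed
  moreover have "countable (\<Union>r\<in>\<rat> - {0}. {x. poly (p - smult r q) x = 0})"
    using nonzero by (intro countable_UN countable_Diff countable_rat countable_finite poly_roots_finite) auto
  ultimately show ?thesis by (rule countable_subset)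
qed

lemma type2_quotient:
  assumes "k \<notin> Bset n"
  shows "- b_type2 n k / a_type2 n k = (evalR (Fpoly n) k - 1) / (evalR (Gpoly n) k - k + 2)"
proof -
  define x where "x = evalR (Fpoly n) k - 1"
  define y where "y = evalR (Gpoly n) k - k + 2"
  have "x \<noteq> 0" "y \<noteq> 0" using assms by (auto simp: Bset_def x_def y_def)
  then show ?thesis
    unfolding a_type2_def b_type2_def x_def[symmetric] y_def[symmetric]
    by (simp add: field_simps power2_eq_square power3_eq_cube)
qed

theorem theorem3p15:
  fixes n :: nat
  assumes "n \<ge> 1"
  shows "countable (S2 n)"
proof -
  define P :: "real poly" where "P = map_poly of_int (Fpoly n) - 1"
  define Q :: "real poly" where "Q = map_poly of_int (Gpoly n) + [:2, -1:]"
  have eval: "poly P k = evalR (Fpoly n) k - 1" "poly Q k = evalR (Gpoly n) k - k + 2" for k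
    by (simp_all add: P_def Q_def evalR_def)
  have "degree P \<le> n"
    unfolding P_def by (intro degree_diff_le) (simp_all add: degree_of_int_poly degree_Fpoly_le)
  moreover have "degree Q = Suc n"
    unfolding Q_def using assms by (subst degree_add_eq_left) (simp_all add: degree_of_int_poly degree_Gpoly)
  ultimately have "countable {k. poly P k \<noteq> 0 \<and> poly Q k \<noteq> 0 \<and> poly P k / poly Q k \<in> \<rat>}"
    by (intro countable_rat_quotient_points) simp
  moreover have "S2 n \<subseteq> {k. poly P k \<noteq> 0 \<and> poly Q k \<noteq> 0 \<and> poly P k / poly Q k \<in> \<rat>}"
  proof clarify
    fix k assume "k \<in> S2 n"
    then have "k \<notin> Bset n" "a_type2 n k \<in> \<rat>" "b_type2 n k \<in> \<rat>"
      by (auto simp: S2_def curve_defined_over_Q_def)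
    moreover have "poly P k / poly Q k = - b_type2 n k / a_type2 n k"
      using type2_quotient[OF \<open>k \<notin> Bset n\<close>] by (simp add: eval)
    ultimately show "poly P k \<noteq> 0 \<and> poly Q k \<noteq> 0 \<and> poly P k / poly Q k \<in> \<rat>"
      by (simp add: eval Bset_def)
  qed
  ultimately show ?thesis by (rule countable_subset[rotated])
qed

end
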